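(* Let $\varphi\in\mathrm{Out}(F_N)$ be a hyperbolic iwip with fixed representatives $T_\pm,\mu_\pm$ as in the context, and put $V_+=\{[T]\in\overline{CV}_N:\langle T,\mu_-\rangle<\langle T,\mu_+\rangle\}$, $V_-=\{[T]\in\overline{CV}_N:\langle T,\mu_-\rangle>\langle T,\mu_+\rangle\}$. Then: (1) $V_+,V_-$ are open neighborhoods of $[T_+]$, $[T_-]$ respectively, with $V_+\varphi\subseteq V_+$ and $V_-\varphi^{-1}\subseteq V_-$; (2) $\bigcap_{n\ge1}\overline{V}_+\varphi^n=\{[T_+]\}$ and $\bigcap_{n\ge1}\overline{V}_-\varphi^{-n}=\{[T_-]\}$; (3) for every neighborhood $V$ of $[T_+]$ there is $n\ge1$ with $V_+\varphi^n\subseteq V$, and for every neighborhood $V'$ of $[T_-]$ there is $n\ge1$ with $V_-\varphi^{-n}\subseteq V'$; (4) for all neighborhoods $V$ of $[T_+]$ and $V'$ of $[T_-]$ there is $M\ge1$ with $(\overline{CV}_N\smallsetminus V')\varphi^n\subseteq V$ and $(\overline{CV}_N\smallsetminus V)\varphi^{-n}\subseteq V'$ for all $n\ge M$; (5) the action of $\langle\varphi\rangle$ on $\overline{CV}_N\smallsetminus\{[T_+],[T_-]\}$ is properly discontinuous and cocompact.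
   Context: $F_N$ is the free group of rank $N\ge3$; $\overline{cv}_N$ is the space of very small minimal isometric actions of $F_N$ on $\mathbb R$-trees, with right $\mathrm{Out}(F_N)$-action $\|g\|_{T\varphi}=\|\Phi(g)\|_T$, and $\overline{CV}_N$ its (compact) projectivization; $\mathrm{Curr}(F_N)$ is the space of geodesic currents with its left linear $\mathrm{Out}(F_N)$-action. The intersection form $\langle\cdot,\cdot\rangle:\overline{cv}_N\times\mathrm{Curr}(F_N)\to\mathbb R_{\ge0}$ is the unique continuous map that is $\mathbb R_{\ge0}$-linear in the current, satisfies $\langle cT,\mu\rangle=c\langle T,\mu\rangle$, $\langle T\varphi,\mu\rangle=\langle T,\varphi\mu\rangle$, and $\langle T,\eta_g\rangle=\|g\|_T$. A hyperbolic iwip $\varphi$ (no positive power fixes a conjugacy class of a proper free factor or of a nontrivial element) has trees $T_\pm$ and currents $\mu_\pm$ (fixed representatives of its attracting/repelling projective fixed points) with $T_+\varphi=\lambda_+T_+$, $T_-\varphi=\lambda_-^{-1}T_-$, $\varphi\mu_+=\lambda_+\mu_+$, $\varphi^{-1}\mu_-=\lambda_-\mu_-$, $\lambda_\pm>1$; $[T_\pm]$ are the only fixed points of $\varphi$ in $\overline{CV}_N$, $[T\varphi^n]\to[T_+]$ for $[T]\ne[T_-]$ and $[T\varphi^{-n}]\to[T_-]$ for $[T]\ne[T_+]$; and $\langle T,\mu_+\rangle=0$ iff $[T]=[T_-]$, $\langle T,\mu_-\rangle=0$ iff $[T]=[T_+]$. *)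

theory Defs
  imports "HOL-Analysis.Analysis"
begin

text \<open>Abstract rendering of the setting: 'T models cv_N (with topology cvtop),
'P models the projectivization CV_N-bar (topology PT), pr is the projection
T \<mapsto> [T], 'C models Curr(F_N) (topology Ctop).\<close>

definition nbhd :: "'a topology \<Rightarrow> 'a \<Rightarrow> 'a set \<Rightarrow> bool" where
  "nbhd X x V \<longleftrightarrow> V \<subseteq> topspace X \<and> (\<exists>U. openin X U \<and> x \<in> U \<and> U \<subseteq> V)"

definition pimg :: "'T topology \<Rightarrow> ('T \<Rightarrow> 'P) \<Rightarrow> ('T \<Rightarrow> 'T) \<Rightarrow> 'P set \<Rightarrow> 'P set" where
  "pimg X pr f A = {pr (f T) | T. T \<in> topspace X \<and> pr T \<in> A}"

text \<open>Integer powers: zpow f g n = f^n for n \<ge> 0 and g^(-n) for n < 0 (g = inverse of f).\<close>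
definition zpow :: "('a \<Rightarrow> 'a) \<Rightarrow> ('a \<Rightarrow> 'a) \<Rightarrow> int \<Rightarrow> 'a \<Rightarrow> 'a" where
  "zpow f g n = (if n \<ge> 0 then f ^^ nat n else g ^^ nat (- n))"

definition properly_discontinuous ::
    "'a topology \<Rightarrow> (int \<Rightarrow> 'a set \<Rightarrow> 'a set) \<Rightarrow> 'a set \<Rightarrow> bool" where
  "properly_discontinuous X act Y \<longleftrightarrow>
     (\<forall>K. compactin X K \<and> K \<subseteq> Y \<longrightarrow> finite {n. act n K \<inter> K \<noteq> {}})"

definition cocompact :: "'a topology \<Rightarrow> (int \<Rightarrow> 'a set \<Rightarrow> 'a set) \<Rightarrow> 'a set \<Rightarrow> bool" where
  "cocompact X act Y \<longleftrightarrow> (\<exists>K. compactin X K \<and> K \<subseteq> Y \<and> (\<Union>n. act n K) = Y)"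

end

theory Submission
  imports Defs
begin

(* Attach to a tree T the two intersection numbers x = <T, mu_-> and
   y = <T, mu_+>.  They are nonnegative, continuous and positively homogeneous, so every
   scale invariant condition on (x, y) (a condition on the slope y / x) describes a subset
   of CV-bar; x vanishes exactly at [T_+] and y exactly at [T_-].  Since phi multiplies y
   by lambda_+ and x by 1 / lambda_-, the n-th power of phi multiplies every slope by
   R^n with R = lambda_+ lambda_- > 1.  In slope coordinates V_+ = {slope > 1} and
   V_- = {slope < 1}, and compactness of CV-bar shows that a compact set avoiding [T_-]
   (resp. [T_+]) has slopes bounded away from 0 (resp. from infinity).  Statements (1)-(5)
   then reduce to elementary facts about the powers of R. *)

lemma compactin_increasing_cover:
  fixes W :: "nat \<Rightarrow> 'a set"
  assumes "compactin X K" "\<And>n. openin X (W n)" "incseq W" "K \<subseteq> (\<Union>n. W n)"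
  shows "\<exists>N. K \<subseteq> W N"
proof -
  obtain F where F: "finite F" "F \<subseteq> range W" "K \<subseteq> \<Union>F"
    using assms(1,2,4) unfolding compactin_def by (metis imageE)
  then obtain J where J: "finite J" "F = W ` J"
    by (meson finite_subset_image)
  have "W j \<subseteq> W (Max (insert 0 J))" if "j \<in> J" for j
    using J(1) that assms(3) by (simp add: monoD)
  then have "\<Union>F \<subseteq> W (Max (insert 0 J))"
    using J(2) by auto
  then show ?thesis
    using F(3) by blast
qed

lemma continuous_map_slice:
  assumes "continuous_map (prod_topology X Y) Z (\<lambda>(x, y). h x y)" "y \<in> topspace Y"
  shows "continuous_map X Z (\<lambda>x. h x y)"
proof -
  have "continuous_map X (prod_topology X Y) (\<lambda>x. (x, y))"
    using assms(2) by (intro continuous_map_pairedI) auto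
  from continuous_map_compose[OF this assms(1)] show ?thesis by (simp add: o_def)
qed

lemma power_int_less_iff_exp:
  fixes R :: real
  assumes "R > 1"
  shows "R powi m < R powi n \<longleftrightarrow> m < n"
proof
  assume "R powi m < R powi n"
  then show "m < n"
    using power_int_strict_increasing[OF _ assms, of n m] by (metis linorder_neqE less_irrefl order.asym)
qed (rule power_int_strict_increasing[OF _ assms])

lemma finite_power_int_window:
  fixes R c :: real
  assumes "R > 1"
  shows "finite {n::int. 1 / c < R powi n \<and> R powi n < c}"
proof -
  obtain N where N: "c < R ^ N"
    using real_arch_pow[OF assms] by blast
  have "n \<in> {- int N..int N}" if n: "1 / c < R powi n" "R powi n < c" for n
  proof -
    have c: "c > 0"
      using n(2) zero_less_power_int[of R n] assms by linarith
    have "R powi n < R powi int N"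
      using n(2) N by (simp only: power_int_of_nat)
    then have "n < int N" using power_int_less_iff_exp[OF assms] by blast
    moreover have "1 / R ^ N < 1 / c"
      using N c by (simp add: frac_less2)
    then have "R powi (- int N) < R powi n"
      using n(1) by (simp only: power_int_minus_divide power_int_of_nat)
    then have "- int N < n" using power_int_less_iff_exp[OF assms] by blast
    ultimately show ?thesis by simp
  qed
  then have "{n::int. 1 / c < R powi n \<and> R powi n < c} \<subseteq> {- int N..int N}"
    by blast
  then show ?thesis
    by (rule finite_subset) simp
qed

lemma power_int_bracket:
  fixes R r :: real
  assumes "R > 1" "r > 0"
  shows "\<exists>n::int. R powi n \<le> r \<and> r < R powi (n + 1)"
proof -
  define n where "n = \<lfloor>log R r\<rfloor>"
  have pw: "R powi k = R powr real_of_int k" for k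
    using assms(1) by (simp add: powr_real_of_int')
  have "R powr real_of_int n \<le> R powr log R r"
    using assms unfolding n_def by (intro powr_mono) auto
  moreover have "R powr log R r < R powr real_of_int (n + 1)"
    using assms unfolding n_def by (subst powr_less_cancel_iff) linarith+
  ultimately have "R powr real_of_int n \<le> r" "r < R powr real_of_int (n + 1)"
    using assms by simp_all
  then show ?thesis
    using assms by (intro exI[of _ n]) (simp add: pw)
qed

(* A condition on the pair of intersection numbers (x, y) which is invariant under
   simultaneous positive scaling; such conditions describe sets of projective classes. *)
definition scale_invariant :: "(real \<Rightarrow> real \<Rightarrow> bool) \<Rightarrow> bool" where
  "scale_invariant Q \<longleftrightarrow> (\<forall>c>0. \<forall>x y. Q (c * x) (c * y) \<longleftrightarrow> Q x y)"

lemma scale_invariant_above: "scale_invariant (\<lambda>x y. t * x < y)"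
  unfolding scale_invariant_def by (auto simp: mult.left_commute[of t])

lemma scale_invariant_below: "scale_invariant (\<lambda>x y. y < t * x)"
  unfolding scale_invariant_def by (auto simp: mult.left_commute[of t])

lemma scale_invariant_sector: "scale_invariant (\<lambda>x y. x \<le> y \<and> y \<le> t * x)"
  unfolding scale_invariant_def by (auto simp: mult.left_commute[of t])

lemma scale_invariant_not: "scale_invariant Q \<Longrightarrow> scale_invariant (\<lambda>x y. \<not> Q x y)"
  unfolding scale_invariant_def by auto

lemma scale_invariant_rescale: "scale_invariant Q \<Longrightarrow> scale_invariant (\<lambda>x y. Q x (y / r))"
  unfolding scale_invariant_def by (metis times_divide_eq_right)

lemma pimg_mono: "A \<subseteq> B \<Longrightarrow> pimg X pr h A \<subseteq> pimg X pr h B"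
  unfolding pimg_def by auto

(* The coordinates x = I T b and y = I T a are
   nonnegative, homogeneous and continuous; f multiplies y by alpha and g multiplies x by
   beta; the class [Tp] is the only one with x = 0 and [Tm] the only one with y = 0.
   For phi this is (a, b) = (mu_+, mu_-); for phi^{-1} the same data with roles exchanged. *)
locale slope_dynamics =
  fixes cvtop :: "'T topology" and PT :: "'P topology" and pr :: "'T \<Rightarrow> 'P"
    and scal :: "real \<Rightarrow> 'T \<Rightarrow> 'T" and I :: "'T \<Rightarrow> 'C \<Rightarrow> real"
    and f g :: "'T \<Rightarrow> 'T" and a b :: 'C and \<alpha> \<beta> :: real and Tp Tm :: 'T
  assumes quot: "quotient_map cvtop PT pr"
    and pr_eq: "\<And>S T. S \<in> topspace cvtop \<Longrightarrow> T \<in> topspace cvtop \<Longrightarrow>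
                  pr S = pr T \<longleftrightarrow> (\<exists>c>0. S = scal c T)"
    and compact: "compact_space PT"
    and cont_a: "continuous_map cvtop euclideanreal (\<lambda>T. I T a)"
    and cont_b: "continuous_map cvtop euclideanreal (\<lambda>T. I T b)"
    and nonneg_a: "\<And>T. T \<in> topspace cvtop \<Longrightarrow> I T a \<ge> 0"
    and nonneg_b: "\<And>T. T \<in> topspace cvtop \<Longrightarrow> I T b \<ge> 0"
    and scal_a: "\<And>c T. c > 0 \<Longrightarrow> T \<in> topspace cvtop \<Longrightarrow> I (scal c T) a = c * I T a"
    and scal_b: "\<And>c T. c > 0 \<Longrightarrow> T \<in> topspace cvtop \<Longrightarrow> I (scal c T) b = c * I T b"
    and f_in: "\<And>T. T \<in> topspace cvtop \<Longrightarrow> f T \<in> topspace cvtop"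
    and g_in: "\<And>T. T \<in> topspace cvtop \<Longrightarrow> g T \<in> topspace cvtop"
    and f_g: "\<And>T. T \<in> topspace cvtop \<Longrightarrow> f (g T) = T"
    and g_f: "\<And>T. T \<in> topspace cvtop \<Longrightarrow> g (f T) = T"
    and f_a: "\<And>T. T \<in> topspace cvtop \<Longrightarrow> I (f T) a = \<alpha> * I T a"
    and g_b: "\<And>T. T \<in> topspace cvtop \<Longrightarrow> I (g T) b = \<beta> * I T b"
    and Tp_in: "Tp \<in> topspace cvtop" and Tm_in: "Tm \<in> topspace cvtop"
    and zero_a: "\<And>T. T \<in> topspace cvtop \<Longrightarrow> I T a = 0 \<longleftrightarrow> pr T = pr Tm"
    and zero_b: "\<And>T. T \<in> topspace cvtop \<Longrightarrow> I T b = 0 \<longleftrightarrow> pr T = pr Tp"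
    and Tp_Tm: "pr Tp \<noteq> pr Tm"
    and \<alpha>_gt: "\<alpha> > 1" and \<beta>_gt: "\<beta> > 1"
begin

sublocale mirror: slope_dynamics cvtop PT pr scal I g f b a \<beta> \<alpha> Tm Tp
  by (rule slope_dynamics.intro[OF quot pr_eq compact cont_b cont_a nonneg_b nonneg_a scal_b scal_a
        g_in f_in g_f f_g g_b f_a Tm_in Tp_in zero_b zero_a Tp_Tm[symmetric] \<beta>_gt \<alpha>_gt])

abbreviation cv :: "'T set" where "cv \<equiv> topspace cvtop"

lemma topspace_PT: "topspace PT = pr ` cv"
  using quot unfolding quotient_map_def by auto

lemma g_a: "T \<in> cv \<Longrightarrow> I (g T) a = I T a / \<alpha>"
  using f_a[OF g_in, of T] f_g[of T] \<alpha>_gt by (simp add: field_simps)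

lemma f_b: "T \<in> cv \<Longrightarrow> I (f T) b = I T b / \<beta>"
  using g_b[OF f_in, of T] g_f[of T] \<beta>_gt by (simp add: field_simps)

lemma fpow_in: "T \<in> cv \<Longrightarrow> (f ^^ n) T \<in> cv"
  by (induct n) (auto simp: f_in)

lemma gpow_in: "T \<in> cv \<Longrightarrow> (g ^^ n) T \<in> cv"
  by (induct n) (auto simp: g_in)

lemma fpow_gpow: "T \<in> cv \<Longrightarrow> (f ^^ n) ((g ^^ n) T) = T"
proof (induct n arbitrary: T)
  case (Suc n)
  have "(f ^^ Suc n) ((g ^^ Suc n) T) = (f ^^ n) (f (g ((g ^^ n) T)))"
    by (metis comp_apply funpow_Suc_right funpow.simps(2))
  then show ?case using Suc f_g gpow_in by simp
qed simp

lemma gpow_fpow: "T \<in> cv \<Longrightarrow> (g ^^ n) ((f ^^ n) T) = T"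
proof (induct n arbitrary: T)
  case (Suc n)
  have "(g ^^ Suc n) ((f ^^ Suc n) T) = (g ^^ n) (g (f ((f ^^ n) T)))"
    by (metis comp_apply funpow_Suc_right funpow.simps(2))
  then show ?case using Suc g_f fpow_in by simp
qed simp

lemma fpow_a: "T \<in> cv \<Longrightarrow> I ((f ^^ n) T) a = \<alpha> ^ n * I T a"
  by (induct n) (auto simp: f_a fpow_in)

lemma fpow_b: "T \<in> cv \<Longrightarrow> I ((f ^^ n) T) b = I T b / \<beta> ^ n"
  by (induct n) (auto simp: f_b fpow_in)

lemma gpow_a: "T \<in> cv \<Longrightarrow> I ((g ^^ n) T) a = I T a / \<alpha> ^ n"
  by (induct n) (auto simp: g_a gpow_in)

lemma gpow_b: "T \<in> cv \<Longrightarrow> I ((g ^^ n) T) b = \<beta> ^ n * I T b"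
  by (induct n) (auto simp: g_b gpow_in)

abbreviation fpow_int :: "int \<Rightarrow> 'T \<Rightarrow> 'T" where "fpow_int \<equiv> zpow f g"

lemma fpow_int_nat: "fpow_int (int n) = f ^^ n"
  by (simp add: zpow_def)

lemma fpow_int_in: "T \<in> cv \<Longrightarrow> fpow_int n T \<in> cv"
  by (simp add: zpow_def fpow_in gpow_in)

lemma fpow_int_a: "T \<in> cv \<Longrightarrow> I (fpow_int n T) a = \<alpha> powi n * I T a"
  by (simp add: zpow_def power_int_def fpow_a gpow_a power_inverse field_simps)

lemma fpow_int_b: "T \<in> cv \<Longrightarrow> I (fpow_int n T) b = I T b / \<beta> powi n"
  by (simp add: zpow_def power_int_def fpow_b gpow_b power_inverse field_simps)

lemma fpow_int_inverse: "T \<in> cv \<Longrightarrow> fpow_int n (fpow_int (- n) T) = T"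
  by (cases "n = 0") (auto simp: zpow_def fpow_gpow gpow_fpow)

definition ratio_set :: "(real \<Rightarrow> real \<Rightarrow> bool) \<Rightarrow> 'P set" where
  "ratio_set Q = {pr T | T. T \<in> cv \<and> Q (I T b) (I T a)}"

lemma pr_in_topspace: "T \<in> cv \<Longrightarrow> pr T \<in> topspace PT"
  using topspace_PT by auto

lemma ratio_set_subset: "ratio_set Q \<subseteq> topspace PT"
  unfolding ratio_set_def using pr_in_topspace by auto

lemma mem_ratio_set:
  assumes "T \<in> cv" "scale_invariant Q"
  shows "pr T \<in> ratio_set Q \<longleftrightarrow> Q (I T b) (I T a)"
proof
  assume "pr T \<in> ratio_set Q"
  then obtain S where S: "S \<in> cv" "Q (I S b) (I S a)" "pr T = pr S"
    unfolding ratio_set_def by auto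
  then obtain c where "c > 0" "T = scal c S"
    using pr_eq assms(1) by blast
  then show "Q (I T b) (I T a)"
    using S assms(2) scal_a scal_b unfolding scale_invariant_def by auto
qed (use assms in \<open>auto simp: ratio_set_def\<close>)

lemma ratio_set_compl:
  assumes "scale_invariant Q"
  shows "topspace PT - ratio_set Q = ratio_set (\<lambda>x y. \<not> Q x y)"
proof (intro set_eqI iffI)
  fix z assume "z \<in> topspace PT - ratio_set Q"
  then obtain T where "T \<in> cv" "z = pr T" "pr T \<notin> ratio_set Q"
    using topspace_PT by auto
  then show "z \<in> ratio_set (\<lambda>x y. \<not> Q x y)"
    using mem_ratio_set[OF _ assms] unfolding ratio_set_def by auto
next
  fix z assume "z \<in> ratio_set (\<lambda>x y. \<not> Q x y)"
  then obtain T where "T \<in> cv" "z = pr T" "\<not> Q (I T b) (I T a)"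
    unfolding ratio_set_def by auto
  then show "z \<in> topspace PT - ratio_set Q"
    using mem_ratio_set[OF _ assms] pr_in_topspace by auto
qed

(* Open (closed) scale invariant conditions give open (closed) sets, since pr is a quotient map. *)
lemma openin_ratio_set:
  assumes "scale_invariant Q" "open {p. Q (fst p) (snd p)}"
  shows "openin PT (ratio_set Q)"
proof -
  have cont: "continuous_map cvtop euclidean (\<lambda>T. (I T b, I T a))"
    using continuous_map_pairedI[OF cont_b cont_a] by simp
  have "{T \<in> cv. pr T \<in> ratio_set Q} = {T \<in> cv. (I T b, I T a) \<in> {p. Q (fst p) (snd p)}}"
    using mem_ratio_set[OF _ assms(1)] by auto
  then have "openin cvtop {T \<in> cv. pr T \<in> ratio_set Q}"
    using openin_continuous_map_preimage[OF cont, of "{p. Q (fst p) (snd p)}"] assms(2) by auto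
  then show ?thesis
    using quot ratio_set_subset unfolding quotient_map_def by auto
qed

lemma closedin_ratio_set:
  assumes "scale_invariant Q" "closed {p. Q (fst p) (snd p)}"
  shows "closedin PT (ratio_set Q)"
proof -
  have "open {p. \<not> Q (fst p) (snd p)}"
    using assms(2) by (simp add: closed_def Compl_eq)
  then show ?thesis
    using ratio_set_compl[OF assms(1)] openin_ratio_set[OF scale_invariant_not[OF assms(1)]]
      ratio_set_subset unfolding closedin_def by simp
qed

(* One step of the dynamics multiplies the slope y / x by this factor. *)
definition slope_factor :: real where "slope_factor = \<alpha> * \<beta>"

lemma slope_factor_gt1: "slope_factor > 1"
  unfolding slope_factor_def using \<alpha>_gt \<beta>_gt by (simp add: less_1_mult)

(* Key computation: after applying the n-th power and dividing y by slope_factor^n, the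
   coordinates are a common positive multiple of the original ones. *)
lemma fpow_int_rescaled:
  assumes "T \<in> cv" "scale_invariant Q"
  shows "Q (I (fpow_int n T) b) (I (fpow_int n T) a / slope_factor powi n) \<longleftrightarrow> Q (I T b) (I T a)"
proof -
  have pos: "\<alpha> powi n > 0" "\<beta> powi n > 0" using \<alpha>_gt \<beta>_gt by auto
  have b: "I (fpow_int n T) b = (1 / \<beta> powi n) * I T b"
    using fpow_int_b[OF assms(1)] by simp
  have a: "I (fpow_int n T) a / slope_factor powi n = (1 / \<beta> powi n) * I T a"
    using fpow_int_a[OF assms(1)] pos \<alpha>_gt by (simp add: slope_factor_def power_int_mult_distrib)
  have "1 / \<beta> powi n > 0"
    using pos by simp
  then show ?thesis
    unfolding a b using assms(2) unfolding scale_invariant_def by blast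
qed

lemma pimg_fpow_int_ratio_set:
  assumes "scale_invariant Q"
  shows "pimg cvtop pr (fpow_int n) (ratio_set Q) = ratio_set (\<lambda>x y. Q x (y / slope_factor powi n))"
proof (intro set_eqI iffI)
  fix z assume "z \<in> pimg cvtop pr (fpow_int n) (ratio_set Q)"
  then obtain T where T: "T \<in> cv" "pr T \<in> ratio_set Q" "z = pr (fpow_int n T)"
    unfolding pimg_def by auto
  then show "z \<in> ratio_set (\<lambda>x y. Q x (y / slope_factor powi n))"
    using fpow_int_rescaled[OF T(1) assms] mem_ratio_set[OF T(1) assms] fpow_int_in
    unfolding ratio_set_def by auto
next
  fix z assume "z \<in> ratio_set (\<lambda>x y. Q x (y / slope_factor powi n))"
  then obtain S where S: "S \<in> cv" "Q (I S b) (I S a / slope_factor powi n)" "z = pr S"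
    unfolding ratio_set_def by auto
  define T where "T = fpow_int (- n) S"
  have T: "T \<in> cv" "fpow_int n T = S"
    unfolding T_def using S(1) fpow_int_in fpow_int_inverse by auto
  then have "pr T \<in> ratio_set Q"
    using fpow_int_rescaled[OF T(1) assms, of n] S(2) mem_ratio_set[OF T(1) assms] by simp
  then show "z \<in> pimg cvtop pr (fpow_int n) (ratio_set Q)"
    unfolding pimg_def using T S(3) by auto
qed

(* Classes of slope greater (resp. smaller) than t.  Above 1 is V_+ and, for the
   reversed dynamics, V_-. *)
definition Above :: "real \<Rightarrow> 'P set" where "Above t = ratio_set (\<lambda>x y. t * x < y)"
definition Below :: "real \<Rightarrow> 'P set" where "Below t = ratio_set (\<lambda>x y. y < t * x)"

lemma mem_Above: "T \<in> cv \<Longrightarrow> pr T \<in> Above t \<longleftrightarrow> t * I T b < I T a"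
  unfolding Above_def by (rule mem_ratio_set[OF _ scale_invariant_above])

lemma mem_Below: "T \<in> cv \<Longrightarrow> pr T \<in> Below t \<longleftrightarrow> I T a < t * I T b"
  unfolding Below_def by (rule mem_ratio_set[OF _ scale_invariant_below])

lemma openin_Above: "openin PT (Above t)"
  unfolding Above_def
  by (intro openin_ratio_set scale_invariant_above open_Collect_less continuous_intros)

lemma openin_Below: "openin PT (Below t)"
  unfolding Below_def
  by (intro openin_ratio_set scale_invariant_below open_Collect_less continuous_intros)

lemma Above_antimono:
  assumes "s \<le> t" shows "Above t \<subseteq> Above s"
proof
  fix z assume "z \<in> Above t"
  then obtain T where T: "T \<in> cv" "z = pr T" "t * I T b < I T a"
    unfolding Above_def ratio_set_def by auto
  moreover have "s * I T b \<le> t * I T b"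
    using assms nonneg_b[OF T(1)] by (rule mult_right_mono)
  ultimately show "z \<in> Above s"
    using mem_Above by simp
qed

lemma pimg_fpow_int_Above: "pimg cvtop pr (fpow_int n) (Above t) = Above (slope_factor powi n * t)"
proof -
  have "slope_factor powi n > 0" using slope_factor_gt1 by simp
  then have "(\<lambda>x y. t * x < y / slope_factor powi n) = (\<lambda>x y. slope_factor powi n * t * x < y)"
    by (simp add: pos_less_divide_eq mult_ac)
  then show ?thesis
    using pimg_fpow_int_ratio_set[OF scale_invariant_above[of t], of n] unfolding Above_def by simp
qed

lemma pimg_fpow_int_Below: "pimg cvtop pr (fpow_int n) (Below t) = Below (slope_factor powi n * t)"
proof -
  have "slope_factor powi n > 0" using slope_factor_gt1 by simp
  then have "(\<lambda>x y. y / slope_factor powi n < t * x) = (\<lambda>x y. y < slope_factor powi n * t * x)"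
    by (simp add: pos_divide_less_eq mult_ac)
  then show ?thesis
    using pimg_fpow_int_ratio_set[OF scale_invariant_below[of t], of n] unfolding Below_def by simp
qed

lemma pimg_fpow_Above: "pimg cvtop pr (f ^^ n) (Above t) = Above (slope_factor ^ n * t)"
  using pimg_fpow_int_Above[of "int n" t] unfolding fpow_int_nat by simp

lemma pos_b_iff: "T \<in> cv \<Longrightarrow> I T b > 0 \<longleftrightarrow> pr T \<noteq> pr Tp"
  using zero_b nonneg_b by (auto simp: less_le)

lemma pos_a_iff: "T \<in> cv \<Longrightarrow> I T a > 0 \<longleftrightarrow> pr T \<noteq> pr Tm"
  using zero_a nonneg_a by (auto simp: less_le)

(* The attracting class has infinite slope, so it lies in every Above t. *)
lemma Tp_in_Above: "pr Tp \<in> Above t"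
  using mem_Above[OF Tp_in] zero_b[OF Tp_in] pos_a_iff[OF Tp_in] Tp_Tm by simp

lemma Below_mono:
  assumes "s \<le> t" shows "Below s \<subseteq> Below t"
proof
  fix z assume "z \<in> Below s"
  then obtain T where T: "T \<in> cv" "z = pr T" "I T a < s * I T b"
    unfolding Below_def ratio_set_def by auto
  moreover have "s * I T b \<le> t * I T b"
    using assms nonneg_b[OF T(1)] by (rule mult_right_mono)
  ultimately show "z \<in> Below t"
    using mem_Below by simp
qed

lemma Above_Below_disjoint: "Above t \<inter> Below t = {}"
proof (rule equals0I)
  fix z assume z: "z \<in> Above t \<inter> Below t"
  then obtain T where "T \<in> cv" "z = pr T" "t * I T b < I T a"
    unfolding Above_def ratio_set_def by blast
  then show False
    using z mem_Below by auto
qed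

lemma compact_in_Above:
  assumes "compactin PT K" "pr Tm \<notin> K"
  shows "\<exists>s>0. K \<subseteq> Above s"
proof -
  have "\<exists>k. K \<subseteq> Above (1 / Suc k)"
  proof (rule compactin_increasing_cover[OF assms(1) openin_Above])
    show "incseq (\<lambda>k. Above (1 / Suc k))"
    proof (rule monoI, rule Above_antimono)
      fix m n :: nat assume "m \<le> n"
      then show "1 / real (Suc n) \<le> 1 / real (Suc m)"
        by (intro divide_left_mono) auto
    qed
    show "K \<subseteq> (\<Union>k. Above (1 / Suc k))"
    proof
      fix z assume z: "z \<in> K"
      then obtain T where T: "T \<in> cv" "z = pr T"
        using compactin_subset_topspace[OF assms(1)] topspace_PT by blast
      then have "I T a > 0"
        using pos_a_iff assms(2) z by auto
      obtain k where "I T b / I T a < real k"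
        using reals_Archimedean2 by blast
      then have "I T b < real k * I T a"
        using \<open>I T a > 0\<close> by (simp add: pos_divide_less_eq)
      moreover have "real k * I T a \<le> real (Suc k) * I T a"
        using \<open>I T a > 0\<close> by simp
      ultimately have "1 / Suc k * I T b < I T a"
        by (simp add: field_simps)
      then show "z \<in> (\<Union>k. Above (1 / Suc k))"
        using mem_Above[OF T(1)] T(2) by blast
    qed
  qed
  then obtain k where "K \<subseteq> Above (1 / Suc k)" ..
  then show ?thesis by (intro exI[of _ "1 / Suc k"]) simp
qed

lemma compact_in_Below:
  assumes "compactin PT K" "pr Tp \<notin> K"
  shows "\<exists>t. K \<subseteq> Below t"
proof -
  have "\<exists>k. K \<subseteq> Below (real k)"
  proof (rule compactin_increasing_cover[OF assms(1) openin_Below])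
    show "incseq (\<lambda>k. Below (real k))"
      by (intro monoI Below_mono) simp
    show "K \<subseteq> (\<Union>k. Below (real k))"
    proof
      fix z assume z: "z \<in> K"
      then obtain T where T: "T \<in> cv" "z = pr T"
        using compactin_subset_topspace[OF assms(1)] topspace_PT by blast
      then have "I T b > 0"
        using pos_b_iff assms(2) z by auto
      obtain k where "I T a / I T b < real k"
        using reals_Archimedean2 by blast
      then have "I T a < real k * I T b"
        using \<open>I T b > 0\<close> by (simp add: pos_divide_less_eq)
      then show "z \<in> (\<Union>k. Below (real k))"
        using mem_Below[OF T(1)] T(2) by blast
    qed
  qed
  then show ?thesis by blast
qed

lemma open_nbhd_contains_Above:
  assumes "openin PT U" "pr Tp \<in> U"
  shows "\<exists>t. Above t \<subseteq> U"
proof -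
  have "compactin PT (topspace PT - U)"
    using assms(1) by (intro closedin_compact_space[OF compact]) blast
  then obtain t where t: "topspace PT - U \<subseteq> Below t"
    using compact_in_Below assms(2) by blast
  then have "Above t \<subseteq> U"
    using Above_Below_disjoint t openin_subset[OF openin_Above] by blast
  then show ?thesis ..
qed

lemma Above_eventually_within:
  assumes "s > 0"
  shows "\<exists>N. \<forall>n\<ge>N. Above (slope_factor ^ n * s) \<subseteq> Above t"
proof -
  obtain N where N: "t / s < slope_factor ^ N"
    using real_arch_pow[OF slope_factor_gt1] by blast
  have "Above (slope_factor ^ n * s) \<subseteq> Above t" if "n \<ge> N" for n
  proof (rule Above_antimono)
    have "slope_factor ^ N \<le> slope_factor ^ n"
      using slope_factor_gt1 that by (simp add: power_increasing)
    then have "slope_factor ^ N * s \<le> slope_factor ^ n * s"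
      using assms by simp
    moreover have "t < slope_factor ^ N * s"
      using N assms by (simp add: pos_divide_less_eq)
    ultimately show "t \<le> slope_factor ^ n * s"
      by linarith
  qed
  then show ?thesis by blast
qed

lemma Above_one_forward_invariant: "pimg cvtop pr f (Above 1) \<subseteq> Above 1"
  using pimg_fpow_Above[of 1 1] Above_antimono[of 1 slope_factor] slope_factor_gt1 by simp

(* The closure of Above 1 has slope at least 1, so its n-th image has slope at
   least slope_factor^n. *)
lemma closure_iterate_slope:
  assumes "T \<in> cv" "pr T \<in> pimg cvtop pr (f ^^ n) (PT closure_of Above 1)"
  shows "slope_factor ^ n * I T b \<le> I T a"
proof -
  have "PT closure_of Above 1 \<subseteq> topspace PT - Below 1"
    using Above_Below_disjoint openin_subset[OF openin_Above]
    by (intro closure_of_minimal closedin_diff closedin_topspace openin_Below) auto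
  also have "\<dots> = ratio_set (\<lambda>x y. \<not> y < 1 * x)"
    unfolding Below_def by (rule ratio_set_compl[OF scale_invariant_below])
  finally have "pr T \<in> ratio_set (\<lambda>x y. \<not> y / slope_factor powi int n < 1 * x)"
    using pimg_mono[of _ _ cvtop pr "f ^^ n"] assms(2)
      pimg_fpow_int_ratio_set[OF scale_invariant_not[OF scale_invariant_below[of 1]], of "int n"]
    unfolding fpow_int_nat by blast
  moreover have "scale_invariant (\<lambda>x y. \<not> y / slope_factor powi int n < 1 * x)"
    by (intro scale_invariant_rescale scale_invariant_not scale_invariant_below)
  ultimately have "\<not> I T a / slope_factor ^ n < I T b"
    using mem_ratio_set[OF assms(1)] by simp
  moreover have "slope_factor ^ n > 0"
    using slope_factor_gt1 by simp
  ultimately show ?thesis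
    by (simp add: pos_divide_less_eq mult.commute)
qed

lemma unbounded_slope_is_Tp:
  assumes "T \<in> cv" "\<And>n. n \<ge> 1 \<Longrightarrow> slope_factor ^ n * I T b \<le> I T a"
  shows "pr T = pr Tp"
proof -
  have "I T b = 0"
  proof (rule ccontr)
    assume "I T b \<noteq> 0"
    then have "I T b > 0" using nonneg_b[OF assms(1)] by simp
    obtain n where "I T a / I T b < slope_factor ^ n"
      using real_arch_pow[OF slope_factor_gt1] by blast
    then have "I T a < slope_factor ^ n * I T b"
      using \<open>I T b > 0\<close> by (simp add: pos_divide_less_eq)
    moreover have "slope_factor ^ n * I T b \<le> slope_factor ^ Suc n * I T b"
      using slope_factor_gt1 \<open>I T b > 0\<close> by (intro mult_right_mono power_increasing) auto
    ultimately show False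
      using assms(2)[of "Suc n"] by linarith
  qed
  then show ?thesis using zero_b[OF assms(1)] by simp
qed

lemma iterates_of_closure_shrink_to_Tp:
  "(\<Inter>n\<in>{1..}. pimg cvtop pr (f ^^ n) (PT closure_of Above 1)) = {pr Tp}"
proof (intro equalityI subsetI)
  fix z assume z: "z \<in> (\<Inter>n\<in>{1..}. pimg cvtop pr (f ^^ n) (PT closure_of Above 1))"
  then have "z \<in> pimg cvtop pr (f ^^ 1) (PT closure_of Above 1)"
    by blast
  then obtain T where T: "T \<in> cv" "z = pr T"
    unfolding pimg_def using fpow_in by blast
  have "slope_factor ^ n * I T b \<le> I T a" if "n \<ge> 1" for n
    using closure_iterate_slope[OF T(1)] z T(2) that by blast
  then show "z \<in> {pr Tp}"
    using unbounded_slope_is_Tp[OF T(1)] T(2) by simp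
next
  fix z assume "z \<in> {pr Tp}"
  then have "z \<in> pimg cvtop pr (f ^^ n) (Above 1)" for n
    using pimg_fpow_Above Tp_in_Above by simp
  then show "z \<in> (\<Inter>n\<in>{1..}. pimg cvtop pr (f ^^ n) (PT closure_of Above 1))"
    using pimg_mono[OF closure_of_subset[OF openin_subset[OF openin_Above]]] by blast
qed

lemma iterates_into_nbhd:
  assumes "nbhd PT (pr Tp) W"
  shows "\<exists>n\<ge>1. pimg cvtop pr (f ^^ n) (Above 1) \<subseteq> W"
proof -
  obtain U where U: "openin PT U" "pr Tp \<in> U" "U \<subseteq> W"
    using assms unfolding nbhd_def by blast
  obtain t where t: "Above t \<subseteq> U"
    using open_nbhd_contains_Above[OF U(1,2)] by blast
  obtain N where N: "\<forall>n\<ge>N. Above (slope_factor ^ n * 1) \<subseteq> Above t"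
    using Above_eventually_within[OF zero_less_one] by blast
  have "pimg cvtop pr (f ^^ Suc N) (Above 1) = Above (slope_factor ^ Suc N * 1)"
    by (rule pimg_fpow_Above)
  also have "\<dots> \<subseteq> Above t"
    using N le_SucI by blast
  finally have "pimg cvtop pr (f ^^ Suc N) (Above 1) \<subseteq> W"
    using t U(3) by blast
  then show ?thesis
    by (intro exI[of _ "Suc N"]) simp
qed

lemma complement_iterates_into_nbhd:
  assumes "nbhd PT (pr Tp) W" "nbhd PT (pr Tm) W'"
  shows "\<exists>M. \<forall>n\<ge>M. pimg cvtop pr (f ^^ n) (topspace PT - W') \<subseteq> W"
proof -
  obtain U where U: "openin PT U" "pr Tp \<in> U" "U \<subseteq> W"
    using assms(1) unfolding nbhd_def by blast
  obtain U' where U': "openin PT U'" "pr Tm \<in> U'" "U' \<subseteq> W'"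
    using assms(2) unfolding nbhd_def by blast
  obtain t where t: "Above t \<subseteq> U"
    using open_nbhd_contains_Above[OF U(1,2)] by blast
  have "compactin PT (topspace PT - U')"
    using U'(1) by (intro closedin_compact_space[OF compact]) blast
  then obtain s where s: "s > 0" "topspace PT - U' \<subseteq> Above s"
    using compact_in_Above U'(2) by blast
  obtain N where N: "\<forall>n\<ge>N. Above (slope_factor ^ n * s) \<subseteq> Above t"
    using Above_eventually_within[OF s(1)] by blast
  have "pimg cvtop pr (f ^^ n) (topspace PT - W') \<subseteq> W" if "n \<ge> N" for n
  proof -
    have "pimg cvtop pr (f ^^ n) (topspace PT - W') \<subseteq> pimg cvtop pr (f ^^ n) (Above s)"
      using s(2) U'(3) by (intro pimg_mono) blast
    also have "\<dots> = Above (slope_factor ^ n * s)"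
      by (rule pimg_fpow_Above)
    also have "\<dots> \<subseteq> Above t"
      using N that by blast
    finally show ?thesis
      using t U(3) by blast
  qed
  then show ?thesis by blast
qed

definition nonfixed :: "'P set" where "nonfixed = topspace PT - {pr Tp, pr Tm}"

lemma mem_nonfixed: "T \<in> cv \<Longrightarrow> pr T \<in> nonfixed \<longleftrightarrow> I T b > 0 \<and> I T a > 0"
  unfolding nonfixed_def using pos_a_iff pos_b_iff pr_in_topspace by auto

lemma coords_not_both_zero: "T \<in> cv \<Longrightarrow> I T a > 0 \<or> I T b > 0"
  using pos_a_iff pos_b_iff Tp_Tm by auto

lemma fpow_int_nonfixed:
  assumes "T \<in> cv" "pr T \<in> nonfixed"
  shows "pr (fpow_int n T) \<in> nonfixed"
proof -
  have "I T b > 0" "I T a > 0"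
    using mem_nonfixed[OF assms(1)] assms(2) by auto
  then have "I (fpow_int n T) b > 0" "I (fpow_int n T) a > 0"
    using \<alpha>_gt \<beta>_gt by (simp_all add: fpow_int_a fpow_int_b assms(1))
  then show ?thesis
    using mem_nonfixed[OF fpow_int_in[OF assms(1)]] by blast
qed

lemma return_slope_bounds:
  assumes "s > 0" "z \<in> Above s \<inter> Below t" "z \<in> Above (slope_factor powi n * s) \<inter> Below (slope_factor powi n * t)"
  shows "s / t < slope_factor powi n \<and> slope_factor powi n < t / s"
proof -
  obtain T where T: "T \<in> cv" "z = pr T"
    using assms(2) openin_subset[OF openin_Above] topspace_PT by blast
  let ?x = "I T b" and ?y = "I T a" and ?r = "slope_factor powi n"
  have ineqs: "s * ?x < ?y" "?y < t * ?x" "?r * s * ?x < ?y" "?y < ?r * t * ?x"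
    using assms(2,3) mem_Above[OF T(1)] mem_Below[OF T(1)] T(2) by auto
  have "?x > 0"
  proof (rule ccontr)
    assume "\<not> ?x > 0"
    then have "?x = 0" using nonneg_b[OF T(1)] by simp
    then show False using ineqs(1,2) by simp
  qed
  have "s * ?x < t * ?x" "?r * s * ?x < t * ?x" "s * ?x < ?r * t * ?x"
    using ineqs by linarith+
  then have "s < t" "?r * s < t" "s < ?r * t"
    using \<open>?x > 0\<close> mult_less_cancel_right_pos by blast+
  then show ?thesis
    using assms(1) by (simp add: pos_less_divide_eq pos_divide_less_eq)
qed

(* Part (5), proper discontinuity: a compact set of non-fixed classes has slopes in
   some window (s, t), so it meets only finitely many of its translates. *)
lemma properly_discontinuous_nonfixed:
  "properly_discontinuous PT (\<lambda>n. pimg cvtop pr (fpow_int n)) nonfixed"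
  unfolding properly_discontinuous_def
proof (intro allI impI)
  fix K assume K: "compactin PT K \<and> K \<subseteq> nonfixed"
  obtain s where s: "s > 0" "K \<subseteq> Above s"
    using compact_in_Above K unfolding nonfixed_def by blast
  obtain t where t: "K \<subseteq> Below t"
    using compact_in_Below K unfolding nonfixed_def by blast
  have "{n. pimg cvtop pr (fpow_int n) K \<inter> K \<noteq> {}} \<subseteq>
        {n. 1 / (t / s) < slope_factor powi n \<and> slope_factor powi n < t / s}"
  proof
    fix n assume "n \<in> {n. pimg cvtop pr (fpow_int n) K \<inter> K \<noteq> {}}"
    then obtain z where z: "z \<in> pimg cvtop pr (fpow_int n) K" "z \<in> K" by blast
    have "z \<in> pimg cvtop pr (fpow_int n) (Above s) \<inter> pimg cvtop pr (fpow_int n) (Below t)"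
      using z(1) pimg_mono[OF s(2)] pimg_mono[OF t] by blast
    then have "z \<in> Above (slope_factor powi n * s) \<inter> Below (slope_factor powi n * t)"
      unfolding pimg_fpow_int_Above pimg_fpow_int_Below .
    moreover have "z \<in> Above s \<inter> Below t"
      using z(2) s(2) t by blast
    ultimately have "s / t < slope_factor powi n \<and> slope_factor powi n < t / s"
      using return_slope_bounds[OF s(1)] by blast
    then show "n \<in> {n. 1 / (t / s) < slope_factor powi n \<and> slope_factor powi n < t / s}"
      by simp
  qed
  then show "finite {n. pimg cvtop pr (fpow_int n) K \<inter> K \<noteq> {}}"
    using finite_power_int_window[OF slope_factor_gt1] finite_subset by blast
qed

definition fundamental_domain :: "'P set" where
  "fundamental_domain = ratio_set (\<lambda>x y. x \<le> y \<and> y \<le> slope_factor * x)"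

lemma compactin_fundamental_domain: "compactin PT fundamental_domain"
  unfolding fundamental_domain_def
  by (intro closedin_compact_space[OF compact] closedin_ratio_set scale_invariant_sector
      closed_Collect_conj closed_Collect_le continuous_intros)

lemma fundamental_domain_nonfixed: "fundamental_domain \<subseteq> nonfixed"
proof
  fix z assume "z \<in> fundamental_domain"
  then obtain T where T: "T \<in> cv" "z = pr T" "I T b \<le> I T a" "I T a \<le> slope_factor * I T b"
    unfolding fundamental_domain_def ratio_set_def by blast
  have "I T b > 0"
  proof (rule ccontr)
    assume "\<not> I T b > 0"
    then have "I T b = 0" using nonneg_b[OF T(1)] by simp
    then show False using coords_not_both_zero[OF T(1)] T(4) by simp
  qed
  moreover have "I T a > 0"
    using calculation T(3) by simp
  ultimately show "z \<in> nonfixed"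
    using mem_nonfixed[OF T(1)] T(2) by blast
qed

(* Every non-fixed class is moved into the fundamental domain by a suitable power,
   namely the one whose slope_factor power brackets its slope. *)
lemma fundamental_domain_translates_cover:
  assumes "z \<in> nonfixed"
  shows "\<exists>n. z \<in> pimg cvtop pr (fpow_int n) fundamental_domain"
proof -
  obtain T where T: "T \<in> cv" "z = pr T"
    using assms topspace_PT unfolding nonfixed_def by auto
  let ?x = "I T b" and ?y = "I T a"
  have pos: "?x > 0" "?y > 0"
    using mem_nonfixed[OF T(1)] assms T(2) by auto
  obtain n where n: "slope_factor powi n \<le> ?y / ?x" "?y / ?x < slope_factor powi (n + 1)"
    using power_int_bracket[OF slope_factor_gt1] pos by (meson divide_pos_pos)
  have r: "slope_factor powi n > 0" "slope_factor powi (n + 1) = slope_factor powi n * slope_factor"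
    using slope_factor_gt1 by (auto simp: power_int_add_1)
  have "?x \<le> ?y / slope_factor powi n" "?y / slope_factor powi n \<le> slope_factor * ?x"
    using n pos r by (simp_all add: pos_le_divide_eq pos_divide_less_eq pos_divide_le_eq mult_ac)
  then have "z \<in> ratio_set (\<lambda>x y. x \<le> y / slope_factor powi n \<and> y / slope_factor powi n \<le> slope_factor * x)"
    unfolding ratio_set_def using T by blast
  then show ?thesis
    unfolding fundamental_domain_def pimg_fpow_int_ratio_set[OF scale_invariant_sector] by blast
qed

lemma cocompact_nonfixed: "cocompact PT (\<lambda>n. pimg cvtop pr (fpow_int n)) nonfixed"
  unfolding cocompact_def
proof (intro exI conjI)
  show "(\<Union>n. pimg cvtop pr (fpow_int n) fundamental_domain) = nonfixed"
  proof (intro equalityI subsetI)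
    fix z assume "z \<in> (\<Union>n. pimg cvtop pr (fpow_int n) fundamental_domain)"
    then obtain n T where "T \<in> cv" "pr T \<in> fundamental_domain" "z = pr (fpow_int n T)"
      unfolding pimg_def by blast
    then show "z \<in> nonfixed"
      using fpow_int_nonfixed fundamental_domain_nonfixed by blast
  qed (use fundamental_domain_translates_cover in blast)
qed (rule compactin_fundamental_domain, rule fundamental_domain_nonfixed)

end

context slope_dynamics
begin

lemma iterates_exchange_nbhds:
  assumes "nbhd PT (pr Tp) V" "nbhd PT (pr Tm) V'"
  shows "\<exists>M\<ge>1. \<forall>n\<ge>M. pimg cvtop pr (f ^^ n) (topspace PT - V') \<subseteq> V \<and>
                        pimg cvtop pr (g ^^ n) (topspace PT - V) \<subseteq> V'"
proof -
  obtain M1 where "\<forall>n\<ge>M1. pimg cvtop pr (f ^^ n) (topspace PT - V') \<subseteq> V"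
    using complement_iterates_into_nbhd[OF assms] by blast
  moreover obtain M2 where "\<forall>n\<ge>M2. pimg cvtop pr (g ^^ n) (topspace PT - V) \<subseteq> V'"
    using mirror.complement_iterates_into_nbhd[OF assms(2,1)] by blast
  ultimately show ?thesis
    by (intro exI[of _ "max (max M1 M2) 1"]) auto
qed

end

theorem proposition4p10:
  fixes cvtop :: "'T topology" and PT :: "'P topology" and pr :: "'T \<Rightarrow> 'P"
    and scal :: "real \<Rightarrow> 'T \<Rightarrow> 'T"
    and Ctop :: "'C topology" and scalC :: "real \<Rightarrow> 'C \<Rightarrow> 'C"
    and I :: "'T \<Rightarrow> 'C \<Rightarrow> real"
    and act actinv :: "'T \<Rightarrow> 'T" and cact cactinv :: "'C \<Rightarrow> 'C"
    and Tp Tm :: 'T and mp mm :: 'C and lp lm :: real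
    and Vp Vm :: "'P set"
  \<comment> \<open>projectivization: CV-bar is the quotient of cv by positive scaling; compact Hausdorff\<close>
  assumes scal_in: "\<And>c T. c > 0 \<Longrightarrow> T \<in> topspace cvtop \<Longrightarrow> scal c T \<in> topspace cvtop"
    and scal_mult: "\<And>c d T. scal c (scal d T) = scal (c * d) T"
    and scal_one: "\<And>T. scal 1 T = T"
    and quot: "quotient_map cvtop PT pr"
    and pr_eq: "\<And>S T. S \<in> topspace cvtop \<Longrightarrow> T \<in> topspace cvtop \<Longrightarrow>
                  pr S = pr T \<longleftrightarrow> (\<exists>c>0. S = scal c T)"
    and compact: "compact_space PT"
    and hausdorff: "Hausdorff_space PT"
  \<comment> \<open>the intersection form\<close>
    and mp_in: "mp \<in> topspace Ctop" and mm_in: "mm \<in> topspace Ctop"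
    and I_cont: "continuous_map (prod_topology cvtop Ctop) euclideanreal (\<lambda>(T, \<mu>). I T \<mu>)"
    and I_nonneg: "\<And>T \<mu>. T \<in> topspace cvtop \<Longrightarrow> \<mu> \<in> topspace Ctop \<Longrightarrow> I T \<mu> \<ge> 0"
    and I_scal: "\<And>c T \<mu>. c > 0 \<Longrightarrow> T \<in> topspace cvtop \<Longrightarrow> \<mu> \<in> topspace Ctop \<Longrightarrow>
                   I (scal c T) \<mu> = c * I T \<mu>"
    and I_scalC: "\<And>c T \<mu>. c \<ge> 0 \<Longrightarrow> T \<in> topspace cvtop \<Longrightarrow> \<mu> \<in> topspace Ctop \<Longrightarrow>
                   scalC c \<mu> \<in> topspace Ctop \<and> I T (scalC c \<mu>) = c * I T \<mu>"
  \<comment> \<open>the outer automorphism phi acting on cv (right) and on currents (left)\<close>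
    and act_cont: "continuous_map cvtop cvtop act"
    and actinv_cont: "continuous_map cvtop cvtop actinv"
    and act_inv1: "\<And>T. T \<in> topspace cvtop \<Longrightarrow> actinv (act T) = T"
    and act_inv2: "\<And>T. T \<in> topspace cvtop \<Longrightarrow> act (actinv T) = T"
    and act_scal: "\<And>c T. c > 0 \<Longrightarrow> T \<in> topspace cvtop \<Longrightarrow> act (scal c T) = scal c (act T)"
    and cact_in: "\<And>\<mu>. \<mu> \<in> topspace Ctop \<Longrightarrow> cact \<mu> \<in> topspace Ctop"
    and cactinv_in: "\<And>\<mu>. \<mu> \<in> topspace Ctop \<Longrightarrow> cactinv \<mu> \<in> topspace Ctop"
    and cact_inv1: "\<And>\<mu>. \<mu> \<in> topspace Ctop \<Longrightarrow> cactinv (cact \<mu>) = \<mu>"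
    and cact_inv2: "\<And>\<mu>. \<mu> \<in> topspace Ctop \<Longrightarrow> cact (cactinv \<mu>) = \<mu>"
    and cact_scal: "\<And>c \<mu>. c \<ge> 0 \<Longrightarrow> \<mu> \<in> topspace Ctop \<Longrightarrow> cact (scalC c \<mu>) = scalC c (cact \<mu>)"
    and cactinv_scal: "\<And>c \<mu>. c \<ge> 0 \<Longrightarrow> \<mu> \<in> topspace Ctop \<Longrightarrow> cactinv (scalC c \<mu>) = scalC c (cactinv \<mu>)"
    and I_equiv: "\<And>T \<mu>. T \<in> topspace cvtop \<Longrightarrow> \<mu> \<in> topspace Ctop \<Longrightarrow> I (act T) \<mu> = I T (cact \<mu>)"
  \<comment> \<open>hyperbolic iwip data\<close>
    and Tp_in: "Tp \<in> topspace cvtop" and Tm_in: "Tm \<in> topspace cvtop"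
    and lp_gt: "lp > 1" and lm_gt: "lm > 1"
    and Tp_eig: "act Tp = scal lp Tp"
    and Tm_eig: "act Tm = scal (1 / lm) Tm"
    and mp_eig: "cact mp = scalC lp mp"
    and mm_eig: "cactinv mm = scalC lm mm"
    and Tpm_distinct: "pr Tp \<noteq> pr Tm"
    and fixed_pts: "\<And>T. T \<in> topspace cvtop \<Longrightarrow>
                      pr (act T) = pr T \<longleftrightarrow> pr T = pr Tp \<or> pr T = pr Tm"
    and conv_plus: "\<And>T. T \<in> topspace cvtop \<Longrightarrow> pr T \<noteq> pr Tm \<Longrightarrow>
                      limitin PT (\<lambda>n. pr ((act ^^ n) T)) (pr Tp) sequentially"
    and conv_minus: "\<And>T. T \<in> topspace cvtop \<Longrightarrow> pr T \<noteq> pr Tp \<Longrightarrow>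
                      limitin PT (\<lambda>n. pr ((actinv ^^ n) T)) (pr Tm) sequentially"
    and zero_plus: "\<And>T. T \<in> topspace cvtop \<Longrightarrow> I T mp = 0 \<longleftrightarrow> pr T = pr Tm"
    and zero_minus: "\<And>T. T \<in> topspace cvtop \<Longrightarrow> I T mm = 0 \<longleftrightarrow> pr T = pr Tp"
  \<comment> \<open>the sets V_+ and V_-\<close>
    and Vp_def: "Vp = {pr T | T. T \<in> topspace cvtop \<and> I T mm < I T mp}"
    and Vm_def: "Vm = {pr T | T. T \<in> topspace cvtop \<and> I T mm > I T mp}"
  shows
    \<comment> \<open>(1)\<close>
    "(openin PT Vp \<and> pr Tp \<in> Vp \<and> openin PT Vm \<and> pr Tm \<in> Vm \<and>
      pimg cvtop pr act Vp \<subseteq> Vp \<and> pimg cvtop pr actinv Vm \<subseteq> Vm)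
   \<and> \<comment> \<open>(2)\<close>
     (\<Inter>n\<in>{1..}. pimg cvtop pr (act ^^ n) (PT closure_of Vp)) = {pr Tp}
   \<and> (\<Inter>n\<in>{1..}. pimg cvtop pr (actinv ^^ n) (PT closure_of Vm)) = {pr Tm}
   \<and> \<comment> \<open>(3)\<close>
     (\<forall>V. nbhd PT (pr Tp) V \<longrightarrow> (\<exists>n\<ge>1. pimg cvtop pr (act ^^ n) Vp \<subseteq> V))
   \<and> (\<forall>V'. nbhd PT (pr Tm) V' \<longrightarrow> (\<exists>n\<ge>1. pimg cvtop pr (actinv ^^ n) Vm \<subseteq> V'))
   \<and> \<comment> \<open>(4)\<close>
     (\<forall>V V'. nbhd PT (pr Tp) V \<and> nbhd PT (pr Tm) V' \<longrightarrow>
        (\<exists>M\<ge>1. \<forall>n\<ge>M. pimg cvtop pr (act ^^ n) (topspace PT - V') \<subseteq> V \<and>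
                       pimg cvtop pr (actinv ^^ n) (topspace PT - V) \<subseteq> V'))
   \<and> \<comment> \<open>(5)\<close>
     properly_discontinuous PT (\<lambda>n. pimg cvtop pr (zpow act actinv n))
        (topspace PT - {pr Tp, pr Tm})
   \<and> cocompact PT (\<lambda>n. pimg cvtop pr (zpow act actinv n)) (topspace PT - {pr Tp, pr Tm})"
proof -
  have act_in: "\<And>T. T \<in> topspace cvtop \<Longrightarrow> act T \<in> topspace cvtop"
    using funcset_mem[OF continuous_map_funspace[OF act_cont]] .
  have actinv_in: "\<And>T. T \<in> topspace cvtop \<Longrightarrow> actinv T \<in> topspace cvtop"
    using funcset_mem[OF continuous_map_funspace[OF actinv_cont]] .
  have act_mp: "I (act T) mp = lp * I T mp" if T: "T \<in> topspace cvtop" for T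
    using I_equiv[OF T mp_in] mp_eig I_scalC[OF _ T mp_in, of lp] lp_gt by simp
  have actinv_mm: "I (actinv T) mm = lm * I T mm" if T: "T \<in> topspace cvtop" for T
  proof -
    have "I (actinv T) mm = I T (cactinv mm)"
      using I_equiv[OF actinv_in[OF T] cactinv_in[OF mm_in]] act_inv2[OF T] cact_inv2[OF mm_in] by simp
    then show ?thesis
      using mm_eig I_scalC[OF _ T mm_in, of lm] lm_gt by simp
  qed
  interpret slope_dynamics cvtop PT pr scal I act actinv mp mm lp lm Tp Tm
    by (rule slope_dynamics.intro[OF quot pr_eq compact continuous_map_slice[OF I_cont mp_in]
          continuous_map_slice[OF I_cont mm_in] I_nonneg[OF _ mp_in] I_nonneg[OF _ mm_in]
          I_scal[OF _ _ mp_in] I_scal[OF _ _ mm_in] act_in actinv_in act_inv2 act_inv1 act_mp actinv_mm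
          Tp_in Tm_in zero_plus zero_minus Tpm_distinct lp_gt lm_gt])
  have "Vp = Above 1" "Vm = mirror.Above 1"
    unfolding Vp_def Vm_def Above_def mirror.Above_def ratio_set_def mirror.ratio_set_def by simp_all
  then show ?thesis
    using openin_Above Tp_in_Above mirror.openin_Above mirror.Tp_in_Above
      Above_one_forward_invariant mirror.Above_one_forward_invariant
      iterates_of_closure_shrink_to_Tp mirror.iterates_of_closure_shrink_to_Tp
      iterates_into_nbhd mirror.iterates_into_nbhd iterates_exchange_nbhds
      properly_discontinuous_nonfixed cocompact_nonfixed
    unfolding nonfixed_def by simp
qed

end
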